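(* Let $s_1=M[-1,1,0,0]+M[-1,-1,1,0]+M[1,-1,1,1]$. Then for every $n\ge2$, $$x_ns_1=x_{n+1}+q\,x_{n-1}y_1y_2$$ in the quantum cluster algebra $\mathcal{A}_q(B,\Lambda)$ of Kronecker type.
   Context: Based quantum torus: basis $M[a]$, $a\in\mathbb{Z}^4$, $M[a]M[b]=q^{\frac12a^T\Lambda b}M[a+b]$, with $B=\begin{pmatrix}0&2\\-2&0\\1&0\\0&1\end{pmatrix}$, $\Lambda=\begin{pmatrix}0&0&-1&0\\0&0&0&-1\\1&0&0&-2\\0&1&2&0\end{pmatrix}$; $x_1=M[e_1],x_2=M[e_2],y_1=M[e_3],y_2=M[e_4]$. $\mathcal{A}_q(B,\Lambda)$ is the Berenstein–Zelevinsky quantum cluster algebra; quantum mutation at $k$ replaces $x'_k$ by $M_{\Lambda'}[-e_k+\sum_{b'_{ik}>0}b'_{ik}e_i]+M_{\Lambda'}[-e_k-\sum_{b'_{ik}<0}b'_{ik}e_i]$. For $m\ge0$, $x_{m+3}$ is the quantum cluster variable produced at the $(m+1)$-st step of mutating the initial seed successively at $1,2,1,2,\dots$; e.g. $x_3=M[-1,2,0,0]+M[-1,0,1,0]$. *)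

theory Defs
  imports Main "HOL-Library.Poly_Mapping" "HOL-Library.Product_Plus"
begin

text \<open>An element of the torus is a finite
  Z-linear combination of the basis elements v^i M[a] (a in Z^4, i in Z), where
  v = q^(1/2); the key ((a, i)) carries the coefficient of v^i M[a].\<close>

type_synonym lat = "int \<times> int \<times> int \<times> int"
type_synonym qtorus = "(lat \<times> int) \<Rightarrow>\<^sub>0 int"

definition vec_of :: "lat \<Rightarrow> nat \<Rightarrow> int" where
  "vec_of a = (case a of (a0, a1, a2, a3) \<Rightarrow>
     (\<lambda>i. if i = 0 then a0 else if i = 1 then a1 else if i = 2 then a2 else if i = 3 then a3 else 0))"

definition lat_of :: "(nat \<Rightarrow> int) \<Rightarrow> lat" where
  "lat_of c = (c 0, c 1, c 2, c 3)"

text \<open>Indices 0..3 correspond to the indices 1..4 of the paper.\<close>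

definition Bmat :: "nat \<Rightarrow> nat \<Rightarrow> int" where
  "Bmat i j = (if (i, j) = (0, 1) then 2 else if (i, j) = (1, 0) then -2
     else if (i, j) = (2, 0) then 1 else if (i, j) = (3, 1) then 1 else 0)"

definition Lam :: "nat \<Rightarrow> nat \<Rightarrow> int" where
  "Lam i j = (if (i, j) = (0, 2) then -1 else if (i, j) = (1, 3) then -1
     else if (i, j) = (2, 0) then 1 else if (i, j) = (2, 3) then -2
     else if (i, j) = (3, 1) then 1 else if (i, j) = (3, 2) then 2 else 0)"

definition lam_form :: "lat \<Rightarrow> lat \<Rightarrow> int" where
  "lam_form a b = (\<Sum>i<4. \<Sum>j<4. vec_of a i * Lam i j * vec_of b j)"

text \<open>Basis element M[a], the element v = q^(1/2), and the twisted product
  M[a] M[b] = q^(a^T Lambda b / 2) M[a+b] = v^(a^T Lambda b) M[a+b].\<close>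

definition tM :: "lat \<Rightarrow> qtorus" where
  "tM a = Poly_Mapping.single (a, 0) 1"

definition tv :: qtorus where
  "tv = Poly_Mapping.single ((0, 0, 0, 0), 1) 1"

definition tmult :: "qtorus \<Rightarrow> qtorus \<Rightarrow> qtorus" where
  "tmult f g = (\<Sum>(a, i)\<in>Poly_Mapping.keys f. \<Sum>(b, j)\<in>Poly_Mapping.keys g.
      Poly_Mapping.single (a + b, i + j + lam_form a b) (Poly_Mapping.lookup f (a, i) * Poly_Mapping.lookup g (b, j)))"

text \<open>The quantum cluster algebra lives inside the skew field of
  fractions of the torus; every identity below is an identity in the ambient skew field.\<close>

definition torus_embedding :: "(qtorus \<Rightarrow> 'a::division_ring) \<Rightarrow> bool" where
  "torus_embedding \<phi> \<longleftrightarrow> inj \<phi> \<and> (\<forall>f g. \<phi> (f + g) = \<phi> f + \<phi> g)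
     \<and> (\<forall>f g. \<phi> (tmult f g) = \<phi> f * \<phi> g) \<and> \<phi> (tM (0, 0, 0, 0)) = 1"

text \<open>A quantum seed is given by its extended cluster X (X 0 .. X 3, the images M(e_i) of the
  toric frame), the exchange matrix B (4x2) and the compatible matrix Lambda (4x4).\<close>

definition frame :: "'a::division_ring \<Rightarrow> (nat \<Rightarrow> nat \<Rightarrow> int) \<Rightarrow> (nat \<Rightarrow> 'a) \<Rightarrow> (nat \<Rightarrow> int) \<Rightarrow> 'a" where
  "frame v L X c = v powi (\<Sum>j<4. \<Sum>l<j. c l * c j * L j l)
     * X 0 powi c 0 * X 1 powi c 1 * X 2 powi c 2 * X 3 powi c 3"

definition Emat :: "(nat \<Rightarrow> nat \<Rightarrow> int) \<Rightarrow> nat \<Rightarrow> nat \<Rightarrow> nat \<Rightarrow> int" where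
  "Emat B k i j = (if j \<noteq> k then (if i = j then 1 else 0)
     else if i = k then -1 else max 0 (- B i k))"

definition mut_B :: "(nat \<Rightarrow> nat \<Rightarrow> int) \<Rightarrow> nat \<Rightarrow> nat \<Rightarrow> nat \<Rightarrow> int" where
  "mut_B B k i j = (if i = k \<or> j = k then - B i j
     else B i j + (\<bar>B i k\<bar> * B k j + B i k * \<bar>B k j\<bar>) div 2)"

definition mut_L :: "(nat \<Rightarrow> nat \<Rightarrow> int) \<Rightarrow> (nat \<Rightarrow> nat \<Rightarrow> int) \<Rightarrow> nat \<Rightarrow> nat \<Rightarrow> nat \<Rightarrow> int" where
  "mut_L B L k i j = (\<Sum>a<4. \<Sum>b<4. Emat B k a i * L a b * Emat B k b j)"

definition mut_X :: "'a::division_ring \<Rightarrow> (nat \<Rightarrow> nat \<Rightarrow> int) \<Rightarrow> (nat \<Rightarrow> nat \<Rightarrow> int) \<Rightarrow> (nat \<Rightarrow> 'a) \<Rightarrow> nat \<Rightarrow> nat \<Rightarrow> 'a" where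
  "mut_X v B L X k = X(k :=
      frame v L X (\<lambda>i. (if i = k then -1 else 0) + max 0 (B i k))
    + frame v L X (\<lambda>i. (if i = k then -1 else 0) + max 0 (- B i k)))"

type_synonym 'a qseed = "(nat \<Rightarrow> 'a) \<times> (nat \<Rightarrow> nat \<Rightarrow> int) \<times> (nat \<Rightarrow> nat \<Rightarrow> int)"

definition mutate :: "'a::division_ring \<Rightarrow> nat \<Rightarrow> 'a qseed \<Rightarrow> 'a qseed" where
  "mutate v k S = (case S of (X, B, L) \<Rightarrow> (mut_X v B L X k, mut_B B k, mut_L B L k))"

definition init_seed :: "(qtorus \<Rightarrow> 'a::division_ring) \<Rightarrow> 'a qseed" where
  "init_seed \<phi> = ((\<lambda>i. \<phi> (tM (lat_of (\<lambda>j. if j = i then 1 else 0)))), Bmat, Lam)"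

fun seed_seq :: "(qtorus \<Rightarrow> 'a::division_ring) \<Rightarrow> nat \<Rightarrow> 'a qseed" where
  "seed_seq \<phi> 0 = init_seed \<phi>"
| "seed_seq \<phi> (Suc t) = mutate (\<phi> tv) (t mod 2) (seed_seq \<phi> t)"

text \<open>x_1 = M[e_1], x_2 = M[e_2], and x_(m+3) is the cluster variable produced at the
  (m+1)-st mutation step (the new entry at the mutated index m mod 2).
  x_0 is not used and is set to 0.\<close>

definition kron_x :: "(qtorus \<Rightarrow> 'a::division_ring) \<Rightarrow> nat \<Rightarrow> 'a" where
  "kron_x \<phi> n = (if n = 0 then 0
     else if n \<le> 2 then fst (init_seed \<phi>) (n - 1)
     else fst (seed_seq \<phi> (n - 2)) ((n - 3) mod 2))"

definition s1 :: qtorus where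
  "s1 = tM (-1, 1, 0, 0) + tM (-1, -1, 1, 0) + tM (1, -1, 1, 1)"

end

theory Submission
  imports Defs
begin

text \<open>Along the mutation sequence 1, 2, 1, 2, ... the exchange and compatibility matrices have
  closed forms in the number t of mutations, so every mutation is the exchange relation
  x_n x_(n+2) = x_(n+1)^2 + q^(n(n-1) - 1/2) y_1^n y_2^(n-1).
  Together with it one shows by induction that x_n is nonzero, commutes with v = q^(1/2) and with
  x_(n+1), and satisfies x_n y_1 = q^(n-2) y_1 x_n and x_n y_2 = q^(1-n) y_2 x_n. The identity then
  follows by induction on n: multiplying the identity for n + 1 on the left by x_n and using the
  exchange relations at n and n - 1 reduces it to the identity for n.\<close>

lemma hom_int_eq_power_int:
  fixes f :: "int \<Rightarrow> 'a::division_ring"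
  assumes hom: "\<And>k l. f (k + l) = f k * f l" and unit: "f 0 = 1"
  shows "f k = f 1 powi k"
proof -
  have inv: "f 1 * f (-1) = 1"
    using hom[of 1 "-1"] unit by simp
  then have nz: "f 1 \<noteq> 0" by auto
  have f_minus: "f (-1) = inverse (f 1)"
    using inv nz by (metis inverse_unique)
  show ?thesis
  proof (induction k rule: int_induct[where k = 0])
    case base
    then show ?case using unit by simp
  next
    case (step1 i)
    then show ?case using nz by (simp add: hom power_int_add_1)
  next
    case (step2 i)
    have "f (i - 1) = f i * f (-1)" using hom[of i "-1"] by simp
    moreover have "f 1 powi (i - 1) = f 1 powi i * f 1 powi (-1)"
      using nz power_int_add[of "f 1" i "-1"] by simp
    ultimately show ?case using step2 f_minus by (simp add: power_int_minus)
  qed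
qed

locale qcomm_calculus =
  fixes v :: "'a::division_ring"
  assumes v_nonzero: "v \<noteq> 0"
begin

definition V :: "int \<Rightarrow> 'a" where "V k = v powi k"

definition vcomm :: "'a \<Rightarrow> bool" where "vcomm a \<longleftrightarrow> v * a = a * v"

definition qcomm :: "int \<Rightarrow> 'a \<Rightarrow> 'a \<Rightarrow> bool" where
  "qcomm k a b \<longleftrightarrow> a * b = V k * (b * a)"

lemma V_0 [simp]: "V 0 = 1"
  by (simp add: V_def)

lemma V_add: "V (k + l) = V k * V l"
  by (simp add: V_def power_int_add v_nonzero)

lemma V_nonzero: "V k \<noteq> 0"
  by (simp add: V_def v_nonzero)

lemma V_mult_V_mult: "V k * (V l * a) = V (k + l) * a"
  by (simp add: V_add mult.assoc)

lemma vcomm_V_commute: "vcomm a \<Longrightarrow> V k * a = a * V k"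
  unfolding vcomm_def V_def power_int_def
  by (metis mult_commute_imp_mult_inverse_commute power_commuting_commutes)

lemma vcomm_V_left_commute: "vcomm a \<Longrightarrow> a * (V k * b) = V k * (a * b)"
  by (metis vcomm_V_commute mult.assoc)

lemma vcomm_V: "vcomm (V k)"
  by (simp add: vcomm_def V_def power_int_commutes)

lemma vcomm_mult: "vcomm a \<Longrightarrow> vcomm b \<Longrightarrow> vcomm (a * b)"
  by (simp add: vcomm_def) (metis mult.assoc)

lemma vcomm_add: "vcomm a \<Longrightarrow> vcomm b \<Longrightarrow> vcomm (a + b)"
  by (simp add: vcomm_def distrib_left distrib_right)

lemma vcomm_inverse: "vcomm a \<Longrightarrow> vcomm (inverse a)"
  unfolding vcomm_def using mult_commute_imp_mult_inverse_commute[of a v] by simp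

lemma vcomm_power: "vcomm a \<Longrightarrow> vcomm (a ^ n)"
  unfolding vcomm_def by (metis power_commuting_commutes)

lemma qcomm_0_iff: "qcomm 0 a b \<longleftrightarrow> a * b = b * a"
  by (simp add: qcomm_def)

lemma qcomm_cong: "qcomm k a b \<Longrightarrow> k = l \<Longrightarrow> qcomm l a b"
  by simp

lemma qcomm_refl: "qcomm 0 a a"
  by (simp add: qcomm_def)

lemma qcomm_V_left: "vcomm b \<Longrightarrow> qcomm 0 (V k) b"
  by (simp add: qcomm_def vcomm_V_commute)

lemma qcomm_V_right: "vcomm a \<Longrightarrow> qcomm 0 a (V k)"
  by (simp add: qcomm_def vcomm_V_commute)

lemma qcomm_sym: "qcomm k a b \<Longrightarrow> qcomm (- k) b a"
  by (simp add: qcomm_def V_mult_V_mult)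

lemma qcomm_add_left: "qcomm k a c \<Longrightarrow> qcomm k b c \<Longrightarrow> qcomm k (a + b) c"
  by (simp add: qcomm_def distrib_left distrib_right)

lemma qcomm_add_right: "qcomm k a b \<Longrightarrow> qcomm k a c \<Longrightarrow> qcomm k a (b + c)"
  by (simp add: qcomm_def distrib_left distrib_right)

lemma qcomm_mult_right:
  assumes "qcomm k a b" "qcomm l a c" "vcomm b"
  shows "qcomm (k + l) a (b * c)"
proof -
  have "a * (b * c) = V k * (b * (a * c))"
    using assms(1) by (simp add: qcomm_def flip: mult.assoc)
  also have "\<dots> = V k * (V l * (b * (c * a)))"
    using assms(2,3) by (simp add: qcomm_def vcomm_V_left_commute)
  finally show ?thesis by (simp add: qcomm_def V_mult_V_mult mult.assoc)
qed

lemma qcomm_mult_left: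
  assumes "qcomm k a c" "qcomm l b c" "vcomm a"
  shows "qcomm (k + l) (a * b) c"
proof -
  have "a * b * c = V l * (a * c * b)"
    using assms(2,3) by (simp add: qcomm_def mult.assoc vcomm_V_left_commute)
  also have "\<dots> = V l * (V k * (c * a * b))"
    using assms(1) by (simp add: qcomm_def mult.assoc)
  finally show ?thesis by (simp add: qcomm_def V_mult_V_mult add.commute mult.assoc)
qed

lemma qcomm_power_left:
  assumes "qcomm k a b" "vcomm a"
  shows "qcomm (int n * k) (a ^ n) b"
proof (induction n)
  case (Suc n)
  show ?case
    using qcomm_mult_left[OF assms(1) Suc assms(2)] by (simp add: algebra_simps)
qed (simp add: qcomm_def)

lemma qcomm_power_right:
  assumes "qcomm k a b" "vcomm b"
  shows "qcomm (int n * k) a (b ^ n)"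
proof (induction n)
  case (Suc n)
  show ?case
    using qcomm_mult_right[OF assms(1) Suc assms(2)] by (simp add: algebra_simps)
qed (simp add: qcomm_def)

lemma qcomm_inverse_left:
  assumes "qcomm k a b" "a \<noteq> 0" "vcomm a"
  shows "qcomm (- k) (inverse a) b"
proof -
  have "b * inverse a = inverse a * (a * b) * inverse a"
    using assms(2) by (simp add: mult.assoc[symmetric])
  also have "\<dots> = V k * (inverse a * b)"
    using assms by (simp add: qcomm_def mult.assoc vcomm_V_left_commute vcomm_inverse)
  finally show ?thesis
    by (simp add: qcomm_def V_mult_V_mult)
qed

lemma qcomm_inverse_right: "qcomm k a b \<Longrightarrow> b \<noteq> 0 \<Longrightarrow> vcomm b \<Longrightarrow> qcomm (- k) a (inverse b)"
  using qcomm_sym[OF qcomm_inverse_left[OF qcomm_sym]] by simp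

end

lemma eq_inverse_mult_if_mult_eq:
  fixes a :: "'a::division_ring"
  shows "a * b = c \<Longrightarrow> a \<noteq> 0 \<Longrightarrow> b = inverse a * c"
  by (auto simp flip: mult.assoc)

lemma sum_lessThan_4: "(\<Sum>i<4::nat. f i) = f 0 + f 1 + f 2 + f 3"
  by (simp add: eval_nat_numeral)

lemma lam_form_eq:
  "lam_form (a0, a1, a2, a3) (b0, b1, b2, b3) =
     - a0 * b2 - a1 * b3 + a2 * b0 - 2 * a2 * b3 + a3 * b1 + 2 * a3 * b2"
  by (simp add: lam_form_def sum_lessThan_4 vec_of_def Lam_def algebra_simps)

lemma lam_form_0_left [simp]: "lam_form 0 b = 0"
  by (cases b) (simp add: zero_prod_def lam_form_eq)

lemma lam_form_0_right [simp]: "lam_form a 0 = 0"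
  by (cases a) (simp add: zero_prod_def lam_form_eq)

lemma tmult_single:
  "tmult (Poly_Mapping.single (a, i) 1) (Poly_Mapping.single (b, j) 1)
     = Poly_Mapping.single (a + b, i + j + lam_form a b) 1"
  by (simp add: tmult_def)

locale kronecker_torus =
  fixes \<phi> :: "qtorus \<Rightarrow> 'a::division_ring"
  assumes embedding: "torus_embedding \<phi>"
begin

abbreviation vM :: "int \<Rightarrow> lat \<Rightarrow> qtorus" where
  "vM k a \<equiv> Poly_Mapping.single (a, k) 1"

lemma phi_add: "\<phi> (f + g) = \<phi> f + \<phi> g"
  and phi_tmult: "\<phi> (tmult f g) = \<phi> f * \<phi> g"
  and phi_tM_0: "\<phi> (tM 0) = 1"
  and inj_phi: "inj \<phi>"
  using embedding by (simp_all add: torus_embedding_def zero_prod_def)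

lemma phi_vM_0: "\<phi> (vM k 0) = \<phi> tv powi k"
proof -
  have "\<phi> (vM k 0) = \<phi> (vM 1 0) powi k"
  proof (rule hom_int_eq_power_int)
    show "\<phi> (vM (k + l) 0) = \<phi> (vM k 0) * \<phi> (vM l 0)" for k l
      by (simp add: tmult_single flip: phi_tmult)
    show "\<phi> (vM 0 0) = 1"
      using phi_tM_0 by (simp add: tM_def)
  qed
  then show ?thesis by (simp add: tv_def zero_prod_def)
qed

lemma phi_tv_nonzero: "\<phi> tv \<noteq> 0"
proof
  have "\<phi> 0 = 0" using phi_add[of 0 0] by simp
  moreover assume "\<phi> tv = 0"
  ultimately have "tv = 0" using inj_phi by (metis injD)
  then show False by (simp add: tv_def)
qed

sublocale qcomm_calculus "\<phi> tv"
  by unfold_locales (rule phi_tv_nonzero)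

definition M :: "lat \<Rightarrow> 'a" where "M a = \<phi> (tM a)"

lemma phi_vM: "\<phi> (vM k a) = V k * M a"
proof -
  have "vM k a = tmult (vM k 0) (tM a)"
    by (simp add: tM_def tmult_single)
  then show ?thesis by (simp add: phi_tmult phi_vM_0 M_def V_def)
qed

lemma M_0 [simp]: "M 0 = 1"
  by (simp add: M_def phi_tM_0)

lemma M_mult: "M a * M b = V (lam_form a b) * M (a + b)"
proof -
  have "tmult (tM a) (tM b) = vM (lam_form a b) (a + b)"
    by (simp add: tM_def tmult_single)
  then show ?thesis by (metis M_def phi_tmult phi_vM)
qed

lemma vcomm_M: "vcomm (M a)"
proof -
  have "tmult (vM 1 0) (tM a) = tmult (tM a) (vM 1 0)"
    by (simp add: tM_def tmult_single)
  then show ?thesis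
    using phi_vM_0[of 1] by (metis vcomm_def phi_tmult M_def power_int_1_right)
qed

lemma M_nonzero: "M a \<noteq> 0"
proof
  assume "M a = 0"
  then have "M a * M (- a) = 0" by simp
  then show False by (simp add: M_mult V_nonzero)
qed

lemma qcomm_M: "qcomm (lam_form a b - lam_form b a) (M a) (M b)"
  by (simp add: qcomm_def M_mult V_mult_V_mult add.commute)

lemma V_minus_2_ne_1: "V (- 2) \<noteq> 1"
proof
  assume "V (- 2) = 1"
  then have "\<phi> (vM (- 2) 0) = \<phi> (vM 0 0)"
    by (simp add: phi_vM)
  then have "vM (- 2) 0 = vM 0 0" using inj_phi by (metis injD)
  then show False by (simp add: frag_of_eq)
qed

end

text \<open>The exchange and compatibility matrices after t mutations: index t mod 2 carries
  x_(t+1), the variable mutated next, index 1 - t mod 2 carries x_(t+2), and indices 2, 3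
  carry y_1, y_2.\<close>

definition exchange_matrix :: "nat \<Rightarrow> nat \<Rightarrow> nat \<Rightarrow> int" where
  "exchange_matrix t i j =
     (if i \<ge> 4 \<or> j \<ge> 2 then 0
      else if j = t mod 2 then
        (if i = t mod 2 then 0 else if i < 2 then -2 else if i = 2 then int t + 1 else int t)
      else (if i = t mod 2 then 2 else if i < 2 then 0 else if i = 2 then - int t else 1 - int t))"

definition lam_y1 :: "nat \<Rightarrow> nat \<Rightarrow> int" where
  "lam_y1 t i = (if i = t mod 2 then int t - 1 else int t)"

definition lam_y2 :: "nat \<Rightarrow> nat \<Rightarrow> int" where
  "lam_y2 t i = (if i = t mod 2 then - int t else - int t - 1)"

definition compatibility_matrix :: "nat \<Rightarrow> nat \<Rightarrow> nat \<Rightarrow> int" where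
  "compatibility_matrix t i j =
     (if i < 2 \<and> j = 2 then lam_y1 t i else if i < 2 \<and> j = 3 then lam_y2 t i
      else if i = 2 \<and> j < 2 then - lam_y1 t j else if i = 3 \<and> j < 2 then - lam_y2 t j
      else if i = 2 \<and> j = 3 then -2 else if i = 3 \<and> j = 2 then 2 else 0)"

lemma Bmat_eq_exchange_matrix: "Bmat = exchange_matrix 0"
  by (intro ext) (auto simp: Bmat_def exchange_matrix_def)

lemma Lam_eq_compatibility_matrix: "Lam = compatibility_matrix 0"
  by (intro ext) (auto simp: Lam_def compatibility_matrix_def lam_y1_def lam_y2_def)

lemma nat_less_4_cases: obtains "i = (0::nat)" | "i = 1" | "i = 2" | "i = 3" | "i \<ge> 4"
  by linarith

lemma mut_B_exchange_matrix:
  "mut_B (exchange_matrix t) (t mod 2) = exchange_matrix (Suc t)"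
proof (intro ext)
  fix i j
  show "mut_B (exchange_matrix t) (t mod 2) i j = exchange_matrix (Suc t) i j"
    by (cases "even t"; cases i rule: nat_less_4_cases; cases j rule: nat_less_4_cases)
       (auto simp: mut_B_def exchange_matrix_def mod_Suc even_iff_mod_2_eq_zero
          odd_iff_mod_2_eq_one)
qed

lemma mut_L_compatibility_matrix:
  "mut_L (exchange_matrix t) (compatibility_matrix t) (t mod 2) = compatibility_matrix (Suc t)"
proof (intro ext)
  fix i j
  show "mut_L (exchange_matrix t) (compatibility_matrix t) (t mod 2) i j
      = compatibility_matrix (Suc t) i j"
    by (cases "even t"; cases i rule: nat_less_4_cases; cases j rule: nat_less_4_cases)
       (auto simp: mut_L_def sum_lessThan_4 Emat_def exchange_matrix_def
          compatibility_matrix_def lam_y1_def lam_y2_def mod_Suc even_iff_mod_2_eq_zero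
          odd_iff_mod_2_eq_one)
qed

lemma frame_eq:
  "frame w L X c = w powi
     (c 0 * c 1 * L 1 0 + c 0 * c 2 * L 2 0 + c 1 * c 2 * L 2 1 + c 0 * c 3 * L 3 0
       + c 1 * c 3 * L 3 1 + c 2 * c 3 * L 3 2)
     * X 0 powi c 0 * X 1 powi c 1 * X 2 powi c 2 * X 3 powi c 3"
  by (simp add: frame_def sum_lessThan_4 eval_nat_numeral algebra_simps)

context kronecker_torus
begin

definition x :: "nat \<Rightarrow> 'a" where "x n = kron_x \<phi> n"

definition y1 :: 'a where "y1 = M (0, 0, 1, 0)"

definition y2 :: 'a where "y2 = M (0, 0, 0, 1)"

abbreviation cluster :: "nat \<Rightarrow> nat \<Rightarrow> 'a" where
  "cluster t \<equiv> fst (seed_seq \<phi> t)"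

lemma seed_seq_matrices:
  "snd (seed_seq \<phi> t) = (exchange_matrix t, compatibility_matrix t)"
proof (induction t)
  case 0
  then show ?case
    by (simp add: init_seed_def Bmat_eq_exchange_matrix Lam_eq_compatibility_matrix)
next
  case (Suc t)
  then show ?case
    by (cases "seed_seq \<phi> t")
       (simp add: mutate_def mut_B_exchange_matrix mut_L_compatibility_matrix)
qed

lemma cluster_Suc:
  "cluster (Suc t)
     = mut_X (\<phi> tv) (exchange_matrix t) (compatibility_matrix t) (cluster t) (t mod 2)"
  using seed_seq_matrices[of t] by (cases "seed_seq \<phi> t") (simp add: mutate_def)

lemma x_Suc_Suc_Suc:
  "x (t + 3)
     = mut_X (\<phi> tv) (exchange_matrix t) (compatibility_matrix t) (cluster t) (t mod 2) (t mod 2)"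
  by (simp add: x_def kron_x_def flip: cluster_Suc)

lemma cluster_eq:
  "cluster t (t mod 2) = x (t + 1) \<and> cluster t (1 - t mod 2) = x (t + 2)
     \<and> cluster t 2 = y1 \<and> cluster t 3 = y2"
proof (induction t)
  case 0
  then show ?case
    by (simp add: x_def kron_x_def init_seed_def lat_of_def y1_def y2_def M_def)
next
  case (Suc t)
  have k: "t mod 2 < 2" "1 - t mod 2 \<noteq> t mod 2" by presburger+
  have parity: "Suc t mod 2 = 1 - t mod 2" "1 - Suc t mod 2 = t mod 2"
    by (simp_all add: mod_Suc)
  have new: "x (Suc t + 2) = cluster (Suc t) (t mod 2)"
    by (simp add: x_def kron_x_def)
  show ?case
    using Suc k by (simp only: parity new cluster_Suc) (auto simp: mut_X_def)
qed

lemma x_mutation: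
  "x (t + 3) = V (2 * int t * (int t + 1) - 1) * inverse (x (t + 1)) * y1 ^ (t + 1) * y2 ^ t
     + (if even t then inverse (x (t + 1)) * x (t + 2) ^ 2 else x (t + 2) ^ 2 * inverse (x (t + 1)))"
proof -
  have e: "(- int t - 1) * (1 - int t) - int t * int t + (int t + 1) * int t * 2
      = 2 * int t * (int t + 1) - 1"
    by (simp add: algebra_simps)
  have p: "y1 powi (int t + 1) = y1 ^ (t + 1)"
    by (metis of_nat_Suc power_int_of_nat add.commute Suc_eq_plus1)
  have Y: "cluster t 2 = y1" "cluster t 3 = y2"
    using cluster_eq[of t] by auto
  show ?thesis
  proof (cases "even t")
    case True
    then have k: "t mod 2 = 0" by simp
    have X: "cluster t 0 = x (t + 1)" "cluster t (Suc 0) = x (t + 2)"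
      using cluster_eq[of t] k by auto
    show ?thesis
      unfolding x_Suc_Suc_Suc k using True
      by (simp add: mut_X_def frame_eq X Y exchange_matrix_def compatibility_matrix_def
          lam_y1_def lam_y2_def k V_def e p)
  next
    case False
    then have k: "t mod 2 = 1" by presburger
    have X: "cluster t 0 = x (t + 2)" "cluster t (Suc 0) = x (t + 1)"
      using cluster_eq[of t] k by auto
    show ?thesis
      unfolding x_Suc_Suc_Suc k using False
      by (simp add: mut_X_def frame_eq X Y exchange_matrix_def compatibility_matrix_def
          lam_y1_def lam_y2_def k V_def e p)
  qed
qed

definition exchange_monomial :: "nat \<Rightarrow> 'a" where
  "exchange_monomial n = V (2 * int n * (int n - 1) - 1) * y1 ^ n * y2 ^ (n - 1)"

definition x_regular :: "nat \<Rightarrow> bool" where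
  "x_regular n \<longleftrightarrow> x n \<noteq> 0 \<and> vcomm (x n)
     \<and> qcomm (2 * (int n - 2)) (x n) y1 \<and> qcomm (- 2 * (int n - 1)) (x n) y2"

lemma exchange_relation:
  assumes "n \<ge> 1" "x_regular n" and comm: "x n * x (n + 1) = x (n + 1) * x n"
  shows "x n * x (n + 2) = x (n + 1) ^ 2 + exchange_monomial n"
proof -
  obtain t where t: "n = t + 1" using assms(1) by (metis add.commute le_Suc_ex)
  have nz: "x n \<noteq> 0" and vc: "vcomm (x n)" using assms(2) by (auto simp: x_regular_def)
  have exponent: "2 * int t * (int t + 1) - 1 = 2 * int n * (int n - 1) - 1"
    by (simp add: t algebra_simps)
  have x_new: "x (n + 2) = V (2 * int n * (int n - 1) - 1) * inverse (x n) * y1 ^ n * y2 ^ (n - 1)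
      + (if even t then inverse (x n) * x (n + 1) ^ 2 else x (n + 1) ^ 2 * inverse (x n))"
    using x_mutation[of t] unfolding exponent
    by (simp add: t eval_nat_numeral)
  have "x n * x (n + 1) ^ 2 = x (n + 1) ^ 2 * x n"
    using comm by (metis power_commuting_commutes)
  then have swap: "x n * (x (n + 1) ^ 2 * inverse (x n)) = x (n + 1) ^ 2"
    using nz by (simp flip: mult.assoc) (simp add: mult.assoc)
  have cancel: "x n * (inverse (x n) * a) = a" for a
    using nz by (simp flip: mult.assoc)
  show ?thesis
    unfolding x_new exchange_monomial_def
    using swap by (simp add: distrib_left cancel mult.assoc vcomm_V_left_commute[OF vc])
qed

lemma x_1: "x 1 = M (1, 0, 0, 0)"
  and x_2: "x 2 = M (0, 1, 0, 0)"
  by (simp_all add: x_def kron_x_def init_seed_def lat_of_def M_def)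

lemma vcomm_y1: "vcomm y1"
  and vcomm_y2: "vcomm y2"
  and y1_nonzero: "y1 \<noteq> 0"
  and y2_nonzero: "y2 \<noteq> 0"
  by (simp_all add: y1_def y2_def vcomm_M M_nonzero)

lemma qcomm_y2_y1: "qcomm 4 y2 y1"
  using qcomm_M[of "(0, 0, 0, 1)" "(0, 0, 1, 0)"] by (simp add: y1_def y2_def lam_form_eq)

lemma vcomm_exchange_monomial: "vcomm (exchange_monomial n)"
  by (simp add: exchange_monomial_def vcomm_mult vcomm_V vcomm_power vcomm_y1 vcomm_y2)

lemma exchange_monomial_nonzero: "exchange_monomial n \<noteq> 0"
  by (simp add: exchange_monomial_def V_nonzero y1_nonzero y2_nonzero)

lemma qcomm_exchange_monomial_y1: "qcomm (int (n - 1) * 4) (exchange_monomial n) y1"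
  using qcomm_mult_left[OF qcomm_mult_left[OF qcomm_V_left qcomm_power_left[OF qcomm_refl]]
      qcomm_power_left[OF qcomm_y2_y1]]
  by (simp add: exchange_monomial_def vcomm_mult vcomm_V vcomm_power vcomm_y1 vcomm_y2)

lemma qcomm_exchange_monomial_y2: "qcomm (int n * (- 4)) (exchange_monomial n) y2"
  using qcomm_mult_left[OF qcomm_mult_left[OF qcomm_V_left qcomm_power_left[OF qcomm_sym[OF qcomm_y2_y1]]]
      qcomm_power_left[OF qcomm_refl]]
  by (simp add: exchange_monomial_def vcomm_mult vcomm_V vcomm_power vcomm_y1 vcomm_y2)

lemma qcomm_exchange_monomial_right:
  assumes "qcomm k w y1" "qcomm l w y2" "vcomm w"
  shows "qcomm (int n * k + int (n - 1) * l) w (exchange_monomial n)"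
  using qcomm_mult_right[OF qcomm_mult_right[OF qcomm_V_right qcomm_power_right[OF assms(1)]]
      qcomm_power_right[OF assms(2)]] assms(3)
  by (simp add: exchange_monomial_def vcomm_mult vcomm_V vcomm_power vcomm_y1 vcomm_y2)

lemma qcomm_x_exchange_monomial:
  assumes "n \<ge> 1" "x_regular n"
  shows "qcomm (- 2) (x n) (exchange_monomial n)"
proof -
  have "qcomm (int n * (2 * (int n - 2)) + int (n - 1) * (- 2 * (int n - 1))) (x n) (exchange_monomial n)"
    using assms(2) by (intro qcomm_exchange_monomial_right) (auto simp: x_regular_def)
  then show ?thesis
    by (rule qcomm_cong) (use assms(1) in \<open>simp add: of_nat_diff algebra_simps\<close>)
qed

lemma exchange_numerator:
  assumes n: "n \<ge> 1" and reg: "x_regular n" "x_regular (n + 1)"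
    and comm: "x n * x (n + 1) = x (n + 1) * x n"
  defines "A \<equiv> x (n + 1) ^ 2 + exchange_monomial n"
  shows "A \<noteq> 0" "vcomm A" "qcomm (4 * (int n - 1)) A y1" "qcomm (- 4 * int n) A y2"
    "qcomm 0 (x (n + 1)) A"
proof -
  have b: "vcomm (x (n + 1))" "qcomm (2 * (int n - 1)) (x (n + 1)) y1"
      "qcomm (- 2 * int n) (x (n + 1)) y2"
    using reg(2) by (auto simp: x_regular_def elim: qcomm_cong)
  have nm: "int (n - 1) = int n - 1" using n by simp
  show "vcomm A"
    unfolding A_def by (intro vcomm_add vcomm_power b vcomm_exchange_monomial)
  show "qcomm (4 * (int n - 1)) A y1"
    unfolding A_def using qcomm_power_left[OF b(2,1), of 2] qcomm_exchange_monomial_y1[of n] nm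
    by (intro qcomm_add_left) (auto elim!: qcomm_cong)
  show "qcomm (- 4 * int n) A y2"
    unfolding A_def using qcomm_power_left[OF b(3,1), of 2] qcomm_exchange_monomial_y2[of n]
    by (intro qcomm_add_left) (auto elim!: qcomm_cong)
  show "qcomm 0 (x (n + 1)) A"
    unfolding A_def
    using qcomm_power_right[OF qcomm_refl b(1), of 2] qcomm_exchange_monomial_right[OF b(2,3,1), of n] nm
    by (intro qcomm_add_right) (auto elim!: qcomm_cong simp: algebra_simps)
  show "A \<noteq> 0"
  proof
    assume "A = 0"
    then have "exchange_monomial n = - (x (n + 1) ^ 2)"
      unfolding A_def by (simp add: eq_neg_iff_add_eq_0 add.commute)
    then have "x n * exchange_monomial n = exchange_monomial n * x n"
      using comm by (simp add: power_commuting_commutes)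
    then have "(V (- 2) - 1) * (exchange_monomial n * x n) = 0"
      using qcomm_x_exchange_monomial[OF n reg(1)] by (simp add: qcomm_def algebra_simps)
    then show False
      using V_minus_2_ne_1 exchange_monomial_nonzero reg(1) by (simp add: x_regular_def)
  qed
qed

lemma x_regular_step:
  assumes n: "n \<ge> 1" and reg: "x_regular n" "x_regular (n + 1)"
    and comm: "x n * x (n + 1) = x (n + 1) * x n"
  shows "x_regular (n + 2) \<and> x (n + 1) * x (n + 2) = x (n + 2) * x (n + 1)"
proof -
  define A where "A = x (n + 1) ^ 2 + exchange_monomial n"
  note A = exchange_numerator[OF assms, folded A_def]
  have a: "x n \<noteq> 0" "vcomm (x n)" "qcomm (2 * (int n - 2)) (x n) y1"
      "qcomm (- 2 * (int n - 1)) (x n) y2"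
    using reg(1) by (auto simp: x_regular_def)
  have x_new: "x (n + 2) = inverse (x n) * A"
    using exchange_relation[OF n reg(1) comm] a(1) unfolding A_def
    by (rule eq_inverse_mult_if_mult_eq)
  have "qcomm (- (2 * (int n - 2)) + 4 * (int n - 1)) (x (n + 2)) y1"
    unfolding x_new by (intro qcomm_mult_left qcomm_inverse_left a A vcomm_inverse)
  moreover have "qcomm (- (- 2 * (int n - 1)) + - 4 * int n) (x (n + 2)) y2"
    unfolding x_new by (intro qcomm_mult_left qcomm_inverse_left a A vcomm_inverse)
  moreover have "qcomm (- 0 + 0) (x (n + 1)) (x (n + 2))"
    using comm a unfolding x_new
    by (intro qcomm_mult_right qcomm_inverse_right A vcomm_inverse) (simp_all add: qcomm_0_iff)
  moreover have "x (n + 2) \<noteq> 0" "vcomm (x (n + 2))"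
    unfolding x_new using a A by (simp_all add: vcomm_mult vcomm_inverse)
  ultimately show ?thesis
    by (auto simp: x_regular_def qcomm_0_iff elim!: qcomm_cong)
qed

lemma x_regular:
  assumes "n \<ge> 1"
  shows "x_regular n \<and> x_regular (n + 1) \<and> x n * x (n + 1) = x (n + 1) * x n"
  using assms
proof (induction n rule: dec_induct)
  case base
  have "qcomm (- 2) (x 1) y1" "qcomm 0 (x 1) y2" "qcomm 0 (x 2) y1" "qcomm (- 2) (x 2) y2"
      "qcomm 0 (x 1) (x 2)"
    unfolding x_1 x_2 y1_def y2_def by (rule qcomm_cong[OF qcomm_M], simp add: lam_form_eq)+
  then have "x_regular 1" "x_regular 2" "x 1 * x 2 = x 2 * x 1"
    using x_1 x_2 by (simp_all add: x_regular_def M_nonzero vcomm_M qcomm_0_iff)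
  then show ?case by (simp add: numeral_2_eq_2)
next
  case (step m)
  then show ?case using x_regular_step[of m] by (simp add: eval_nat_numeral)
qed

lemma x_mult_x_Suc_Suc:
  assumes "n \<ge> 1"
  shows "x n * x (n + 2) = x (n + 1) ^ 2 + exchange_monomial n"
  using exchange_relation[OF assms] x_regular[OF assms] by blast

lemma x_Suc_Suc_mult_x:
  assumes "n \<ge> 1"
  shows "x (n + 2) * x n = x (n + 1) ^ 2 + V 2 * exchange_monomial n"
proof -
  have reg: "x_regular n" and comm: "x n * x (n + 1) = x (n + 1) * x n"
    using x_regular[OF assms] by auto
  have nz: "x n \<noteq> 0" and vc: "vcomm (x n)" using reg by (auto simp: x_regular_def)
  have sq: "x (n + 1) ^ 2 * x n = x n * x (n + 1) ^ 2"
    using comm by (metis power_commuting_commutes)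
  have mon: "exchange_monomial n * x n = V 2 * (x n * exchange_monomial n)"
    using qcomm_sym[OF qcomm_x_exchange_monomial[OF assms reg]] by (simp add: qcomm_def)
  have "x (n + 2) = inverse (x n) * (x (n + 1) ^ 2 + exchange_monomial n)"
    using x_mult_x_Suc_Suc[OF assms] nz by (rule eq_inverse_mult_if_mult_eq)
  then have "x (n + 2) * x n = inverse (x n) * (x (n + 1) ^ 2 * x n + exchange_monomial n * x n)"
    by (simp only: mult.assoc distrib_right)
  also have "\<dots> = inverse (x n) * (x n * (x (n + 1) ^ 2 + V 2 * exchange_monomial n))"
    by (simp only: sq mon distrib_left vcomm_V_left_commute[OF vc])
  also have "\<dots> = x (n + 1) ^ 2 + V 2 * exchange_monomial n"
    using nz by (simp flip: mult.assoc)
  finally show ?thesis .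
qed

lemma exchange_monomial_Suc:
  assumes "n \<ge> 1"
  shows "V 4 * (exchange_monomial n * (y1 * y2)) = exchange_monomial (n + 1)"
proof -
  obtain m where m: "n = m + 1" using assms by (metis add.commute le_Suc_ex)
  have swap: "y2 ^ m * y1 = V (int m * 4) * (y1 * y2 ^ m)"
    using qcomm_power_left[OF qcomm_y2_y1 vcomm_y2, of m] by (simp add: qcomm_def)
  have "exchange_monomial n * (y1 * y2)
      = V (2 * int n * (int n - 1) - 1) * (y1 ^ n * ((y2 ^ m * y1) * y2))"
    by (simp add: exchange_monomial_def m mult.assoc)
  also have "\<dots> = V (2 * int n * (int n - 1) - 1 + int m * 4) * (y1 ^ (n + 1) * y2 ^ n)"
  proof -
    have p1: "y1 ^ n * (y1 * w) = y1 ^ (n + 1) * w" for w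
      by (simp add: mult.assoc power_Suc2 del: power_Suc)
    have p2: "y2 ^ m * y2 = y2 ^ n"
      by (simp add: m power_Suc2 del: power_Suc)
    show ?thesis
      by (simp only: swap mult.assoc vcomm_V_left_commute[OF vcomm_power[OF vcomm_y1]] p1 p2
          V_mult_V_mult)
  qed
  finally show ?thesis
    by (simp add: exchange_monomial_def m V_mult_V_mult algebra_simps)
qed

lemma inverse_M: "inverse (M a) = M (- a)"
proof -
  have "lam_form a (- a) = 0"
    by (cases a) (simp add: lam_form_eq algebra_simps)
  then have "M a * M (- a) = 1"
    by (simp add: M_mult)
  then show ?thesis by (rule inverse_unique)
qed

lemma x_3: "x 3 = M (-1, 2, 0, 0) + M (-1, 0, 1, 0)"
  using x_mutation[of 0] unfolding add_0 x_1 x_2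
  by (simp add: y1_def inverse_M power2_eq_square M_mult lam_form_eq mult.assoc
      V_mult_V_mult)

lemma phi_s1: "\<phi> s1 = M (-1, 1, 0, 0) + M (-1, -1, 1, 0) + M (1, -1, 1, 1)"
  by (simp add: s1_def phi_add M_def)

lemma x_2_mult_s1: "x 2 * \<phi> s1 = x 3 + V 2 * x 1 * y1 * y2"
  unfolding x_1 x_2 x_3
  by (simp add: y1_def y2_def phi_s1 distrib_left M_mult lam_form_eq mult.assoc
      vcomm_V_left_commute vcomm_M V_mult_V_mult)

lemma x_mult_s1:
  assumes "n \<ge> 2"
  shows "x n * \<phi> s1 = x (n + 1) + V 2 * x (n - 1) * y1 * y2"
  using assms
proof (induction n rule: dec_induct)
  case base
  then show ?case using x_2_mult_s1 by simp
next
  case (step n)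
  define k where "k = n - 1"
  have n: "n = k + 1" and k: "k \<ge> 1"
    using step(1) by (simp_all add: k_def)
  have reg: "x_regular n" "x_regular (n + 1)" and comm: "x n * x (n + 1) = x (n + 1) * x n"
    using x_regular[of n] k n by auto
  have nz: "x n \<noteq> 0" and vc: "vcomm (x n)" "vcomm (x (n + 1))"
    using reg by (auto simp: x_regular_def)
  have e2: "x (n + 1) * x k = x n ^ 2 + V 2 * exchange_monomial k"
    using x_Suc_Suc_mult_x[OF k] by (simp add: n)
  have zr: "V 4 * (exchange_monomial k * (y1 * y2)) = exchange_monomial n"
    using exchange_monomial_Suc[OF k] by (simp add: n)
  have "x n * (x (n + 1) * \<phi> s1) = x (n + 1) * (x n * \<phi> s1)"
    by (metis comm mult.assoc)
  also have "\<dots> = x (n + 1) * (x (n + 1) + V 2 * (x k * (y1 * y2)))"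
    using step(3) by (simp add: n mult.assoc)
  also have "\<dots> = x (n + 1) ^ 2 + V 2 * ((x (n + 1) * x k) * (y1 * y2))"
    by (simp add: distrib_left power2_eq_square mult.assoc vcomm_V_left_commute[OF vc(2)[simplified]])
  also have "\<dots> = x (n + 1) ^ 2 + exchange_monomial n + V 2 * (x n ^ 2 * (y1 * y2))"
    unfolding e2 zr[symmetric]
    by (simp add: distrib_right distrib_left mult.assoc V_mult_V_mult add_ac)
  also have "\<dots> = x n * (x (n + 2) + V 2 * (x n * (y1 * y2)))"
    using x_mult_x_Suc_Suc[of n] step(1)
    by (simp add: distrib_left power2_eq_square mult.assoc vcomm_V_left_commute[OF vc(1)])
  finally show ?case
    using nz by (simp add: n mult.assoc)
qed

end

theorem mainTheorem6:
  fixes \<phi> :: "qtorus \<Rightarrow> 'a::division_ring" and n :: nat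
  assumes "torus_embedding \<phi>" and "n \<ge> 2"
  shows "kron_x \<phi> n * \<phi> s1
       = kron_x \<phi> (n + 1)
         + (\<phi> tv) ^ 2 * kron_x \<phi> (n - 1) * \<phi> (tM (0, 0, 1, 0)) * \<phi> (tM (0, 0, 0, 1))"
proof -
  interpret kronecker_torus \<phi> by (rule kronecker_torus.intro[OF assms(1)])
  show ?thesis
    using x_mult_s1[OF assms(2)] by (simp add: x_def y1_def y2_def M_def V_def)
qed

end
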